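(* Let $X$ be a finite discrete space with at least two elements, $\Gamma$ a nonempty countable set, and $\varphi:\Gamma\to\Gamma$ a map having a non-quasi-periodic point. Then $(X^\Gamma,\sigma_\varphi)$ is uniform distributional chaotic.
   Context: $X^\Gamma$ has the product topology and a fixed compatible metric $d$; $\sigma_\varphi((x_\alpha)_{\alpha\in\Gamma})=(x_{\varphi(\alpha)})_{\alpha\in\Gamma}$. A point $\theta\in\Gamma$ is non-quasi-periodic if $\{\varphi^n(\theta):n\ge0\}$ is infinite. With $f=\sigma_\varphi$, $\xi(x,y,t,n)=\#\{i\in\{0,\dots,n-1\}:d(f^i(x),f^i(y))<t\}$, $F_{xy}(t)=\liminf_n\xi(x,y,t,n)/n$, $F^*_{xy}(t)=\limsup_n\xi(x,y,t,n)/n$. The system is uniform distributional chaotic if there exist an uncountable set $A\subseteq X^\Gamma$ and $\varepsilon>0$ such that for all distinct $x,y\in A$: $F^*_{xy}(s)=1$ for every $s>0$ and $F_{xy}(\varepsilon)=0$. *)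

theory Defs
  imports "HOL-Analysis.Analysis"
begin

definition shift_map :: "('g \<Rightarrow> 'g) \<Rightarrow> 'g set \<Rightarrow> ('g \<Rightarrow> 'a) \<Rightarrow> ('g \<Rightarrow> 'a)" where
  "shift_map \<phi> \<Gamma> x = (\<lambda>\<alpha>\<in>\<Gamma>. x (\<phi> \<alpha>))"

definition non_quasi_periodic :: "('g \<Rightarrow> 'g) \<Rightarrow> 'g \<Rightarrow> bool" where
  "non_quasi_periodic \<phi> \<theta> \<longleftrightarrow> infinite {(\<phi> ^^ n) \<theta> | n. True}"

definition xi :: "('b \<Rightarrow> 'b \<Rightarrow> real) \<Rightarrow> ('b \<Rightarrow> 'b) \<Rightarrow> 'b \<Rightarrow> 'b \<Rightarrow> real \<Rightarrow> nat \<Rightarrow> nat" where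
  "xi d f x y t n = card {i \<in> {0..<n}. d ((f ^^ i) x) ((f ^^ i) y) < t}"

definition F_lower :: "('b \<Rightarrow> 'b \<Rightarrow> real) \<Rightarrow> ('b \<Rightarrow> 'b) \<Rightarrow> 'b \<Rightarrow> 'b \<Rightarrow> real \<Rightarrow> ereal" where
  "F_lower d f x y t = liminf (\<lambda>n. ereal (real (xi d f x y t n) / real n))"

definition F_upper :: "('b \<Rightarrow> 'b \<Rightarrow> real) \<Rightarrow> ('b \<Rightarrow> 'b) \<Rightarrow> 'b \<Rightarrow> 'b \<Rightarrow> real \<Rightarrow> ereal" where
  "F_upper d f x y t = limsup (\<lambda>n. ereal (real (xi d f x y t n) / real n))"

definition uniform_distributional_chaotic ::
  "'b set \<Rightarrow> ('b \<Rightarrow> 'b \<Rightarrow> real) \<Rightarrow> ('b \<Rightarrow> 'b) \<Rightarrow> bool" where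
  "uniform_distributional_chaotic S d f \<longleftrightarrow>
     (\<exists>A \<subseteq> S. uncountable A \<and> (\<exists>\<epsilon>>0. \<forall>x\<in>A. \<forall>y\<in>A. x \<noteq> y \<longrightarrow>
        (\<forall>s>0. F_upper d f x y s = 1) \<and> F_lower d f x y \<epsilon> = 0))"

end

theory Submission
  imports Defs
begin

text \<open>Fix a point \<open>\<theta>\<close> with infinite forward orbit and two letters \<open>a \<noteq> b\<close>. Every
  \<open>\<omega> : \<nat> \<Rightarrow> bool\<close> is coded by a sequence over \<open>{a, b}\<close> written along the orbit of
  \<open>\<theta>\<close>, with \<open>a\<close> everywhere else. Because the metric induces the product topology on a
  compact space, two points are uniformly far apart when they differ at \<open>\<theta>\<close>, and
  \<open>s\<close>-close when they agree on a suitable finite set of coordinates; under the shift,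
  such a finite set only sees a bounded window of the coded sequence. The codes are
  constant on the factorial blocks \<open>[k!, (k+1)!)\<close>, each of which dominates everything
  before it: all codes agree on the even blocks, and two different codes disagree on
  infinitely many odd blocks. Hence along the shift every pair of distinct coded points is
  \<open>s\<close>-close with upper density \<open>1\<close> and \<open>\<epsilon>\<close>-close with lower density \<open>0\<close>.\<close>

lemma liminf_ereal_eq_0I:
  fixes r :: "nat \<Rightarrow> real"
  assumes nonneg: "\<And>n. 0 \<le> r n" and small: "\<And>\<delta> N. \<delta> > 0 \<Longrightarrow> \<exists>n\<ge>N. r n \<le> \<delta>"
  shows "liminf (\<lambda>n. ereal (r n)) = 0"
proof (rule antisym)
  show "liminf (\<lambda>n. ereal (r n)) \<le> 0"
  proof (rule ccontr)
    assume "\<not> liminf (\<lambda>n. ereal (r n)) \<le> 0"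
    then obtain q :: real where q: "0 < q" "ereal q < liminf (\<lambda>n. ereal (r n))"
      using ereal_dense2[of 0 "liminf (\<lambda>n. ereal (r n))"] by (auto simp: not_le)
    then obtain N where "\<forall>n\<ge>N. q < r n"
      using less_LiminfD[OF q(2)] by (auto simp: eventually_sequentially)
    with small[OF q(1)] show False by force
  qed
qed (use nonneg in \<open>auto intro: Liminf_bounded\<close>)

lemma limsup_ereal_eq_1I:
  fixes r :: "nat \<Rightarrow> real"
  assumes le_1: "\<And>n. r n \<le> 1" and large: "\<And>\<delta> N. \<delta> > 0 \<Longrightarrow> \<exists>n\<ge>N. 1 - \<delta> \<le> r n"
  shows "limsup (\<lambda>n. ereal (r n)) = 1"
proof (rule antisym)
  show "1 \<le> limsup (\<lambda>n. ereal (r n))"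
  proof (rule ccontr)
    assume "\<not> 1 \<le> limsup (\<lambda>n. ereal (r n))"
    then obtain q :: real where q: "q < 1" "limsup (\<lambda>n. ereal (r n)) < ereal q"
      using ereal_dense2[of "limsup (\<lambda>n. ereal (r n))" 1] by (auto simp: not_le)
    then obtain N where "\<forall>n\<ge>N. r n < q"
      using Limsup_lessD[OF q(2)] by (auto simp: eventually_sequentially)
    with large[of "1 - q" N] q(1) show False by force
  qed
qed (use le_1 in \<open>auto intro: Limsup_bounded\<close>)

lemma liminf_density_eq_0I:
  assumes sub: "\<And>i. P i \<Longrightarrow> Q i"
    and sparse: "\<And>\<delta> N. \<delta> > 0 \<Longrightarrow> \<exists>n\<ge>N. real (card {i\<in>{0..<n}. Q i}) \<le> \<delta> * real n"
  shows "liminf (\<lambda>n. ereal (real (card {i\<in>{0..<n}. P i}) / real n)) = 0"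
proof (rule liminf_ereal_eq_0I)
  fix \<delta> :: real and N assume "\<delta> > 0"
  then obtain n where n: "n \<ge> Suc N" "real (card {i\<in>{0..<n}. Q i}) \<le> \<delta> * real n"
    using sparse by blast
  have "card {i\<in>{0..<n}. P i} \<le> card {i\<in>{0..<n}. Q i}"
    using sub by (intro card_mono) auto
  with n show "\<exists>n\<ge>N. real (card {i\<in>{0..<n}. P i}) / real n \<le> \<delta>"
    by (intro exI[of _ n]) (auto simp: divide_le_eq)
qed simp

lemma limsup_density_eq_1I:
  assumes sub: "\<And>i. Q i \<Longrightarrow> P i"
    and dense: "\<And>\<delta> N. \<delta> > 0 \<Longrightarrow> \<exists>n\<ge>N. (1 - \<delta>) * real n \<le> real (card {i\<in>{0..<n}. Q i})"
  shows "limsup (\<lambda>n. ereal (real (card {i\<in>{0..<n}. P i}) / real n)) = 1"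
proof (rule limsup_ereal_eq_1I)
  fix n
  have "card {i\<in>{0..<n}. P i} \<le> card {0..<n}"
    by (intro card_mono) auto
  then show "real (card {i\<in>{0..<n}. P i}) / real n \<le> 1"
    by (cases "n = 0") (auto simp: divide_le_eq)
next
  fix \<delta> :: real and N assume "\<delta> > 0"
  then obtain n where n: "n \<ge> Suc N" "(1 - \<delta>) * real n \<le> real (card {i\<in>{0..<n}. Q i})"
    using dense by blast
  have "card {i\<in>{0..<n}. Q i} \<le> card {i\<in>{0..<n}. P i}"
    using sub by (intro card_mono) auto
  with n show "\<exists>n\<ge>N. 1 - \<delta> \<le> real (card {i\<in>{0..<n}. P i}) / real n"
    by (intro exI[of _ n]) (auto simp: le_divide_eq)
qed

lemma eventually_fact_le_mult_fact_Suc: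
  fixes c \<delta> :: real
  assumes "\<delta> > 0"
  shows "\<forall>\<^sub>F k in sequentially. c * fact k \<le> \<delta> * fact (Suc k)"
proof -
  obtain K :: nat where K: "c / \<delta> \<le> K"
    using real_arch_simple by blast
  have "c * fact k \<le> \<delta> * fact (Suc k)" if "k \<ge> K" for k
  proof -
    have "c \<le> \<delta> * K"
      using K assms by (simp add: divide_le_eq mult.commute)
    also have "\<dots> \<le> \<delta> * real (Suc k)"
      using that assms by (intro mult_left_mono) auto
    finally have "c \<le> \<delta> * real (Suc k)" .
    then have "c * fact k \<le> (\<delta> * real (Suc k)) * fact k"
      by (intro mult_right_mono) auto
    then show ?thesis
      by (simp add: algebra_simps)
  qed
  then show ?thesis
    unfolding eventually_sequentially by blast
qed

definition fact_block :: "nat \<Rightarrow> nat" where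
  "fact_block i = (LEAST k. i < fact (Suc k))"

lemma fact_block_eqI:
  fixes i k :: nat
  assumes "fact k \<le> i" "i < fact (Suc k)"
  shows "fact_block i = k"
  unfolding fact_block_def
proof (rule Least_equality)
  fix k' assume "i < fact (Suc k')"
  then have "\<not> Suc k' \<le> k"
    using assms(1) fact_mono[of "Suc k'" k, where 'a=nat] by (auto simp del: fact_Suc)
  then show "k \<le> k'" by simp
qed (use assms in simp)

text \<open>Constant on each block \<open>[k!, (k+1)!)\<close>: even blocks carry \<open>a\<close>, and block
  \<open>2 \<langle>j, t\<rangle> + 1\<close> (Cantor pairing) carries \<open>b\<close> if \<open>\<omega> j\<close> and \<open>a\<close> otherwise, so every
  \<open>j\<close> owns infinitely many blocks.\<close>
definition block_code :: "'a \<Rightarrow> 'a \<Rightarrow> (nat \<Rightarrow> bool) \<Rightarrow> nat \<Rightarrow> 'a" where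
  "block_code a b \<omega> i =
     (if odd (fact_block i) \<and> \<omega> (fst (prod_decode (fact_block i div 2))) then b else a)"

lemma block_code_even_block:
  assumes "fact k \<le> i" "i < fact (Suc k)" "even k"
  shows "block_code a b \<omega> i = a"
  using fact_block_eqI[OF assms(1,2)] assms(3) by (simp add: block_code_def)

lemma block_code_odd_block:
  assumes "fact k \<le> i" "i < fact (Suc k)" "k = 2 * prod_encode (j, t) + 1"
  shows "block_code a b \<omega> i = (if \<omega> j then b else a)"
  using fact_block_eqI[OF assms(1,2)] assms(3) by (simp add: block_code_def)

lemma range_block_code_subset:
  assumes "a \<in> X" "b \<in> X"
  shows "range (block_code a b \<omega>) \<subseteq> X"
  using assms by (auto simp: block_code_def)

lemma inj_block_code:
  assumes "a \<noteq> b"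
  shows "inj (block_code a b)"
proof (rule injI)
  fix \<omega> \<omega>' assume eq: "block_code a b \<omega> = block_code a b \<omega>'"
  show "\<omega> = \<omega>'"
  proof
    fix j
    define k where "k = 2 * prod_encode (j, 0) + 1"
    have "fact k \<le> (fact k :: nat)" "fact k < (fact (Suc k) :: nat)"
      by (auto simp: k_def)
    from block_code_odd_block[OF this k_def] eq assms show "\<omega> j = \<omega>' j"
      by (metis (full_types))
  qed
qed

lemma block_code_agreement_sparse:
  assumes "\<omega> j \<noteq> \<omega>' j" "a \<noteq> b" "\<delta> > 0"
  shows "\<exists>n\<ge>N. real (card {i\<in>{0..<n}. block_code a b \<omega> i = block_code a b \<omega>' i}) \<le> \<delta> * real n"
proof -
  obtain K where K: "\<forall>k\<ge>K. fact k \<le> \<delta> * fact (Suc k)"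
    using eventually_fact_le_mult_fact_Suc[OF assms(3), of 1] by (auto simp: eventually_sequentially)
  define k where "k = 2 * prod_encode (j, K + N) + 1"
  define n where "n = (fact (Suc k) :: nat)"
  have "K + N \<le> k"
    using le_prod_encode_2[of "K + N" j] by (simp add: k_def)
  then have "N \<le> n"
    using fact_ge_self[of "Suc k"] by (simp add: n_def)
  have "{i\<in>{0..<n}. block_code a b \<omega> i = block_code a b \<omega>' i} \<subseteq> {0..<fact k}"
  proof (rule subsetI, rule ccontr)
    fix i assume i: "i \<in> {i\<in>{0..<n}. block_code a b \<omega> i = block_code a b \<omega>' i}" "i \<notin> {0..<fact k}"
    then have "fact k \<le> i" "i < fact (Suc k)"
      by (auto simp: n_def)
    from block_code_odd_block[OF this k_def] i(1) assms(1,2) show False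
      by (metis (mono_tags) mem_Collect_eq)
  qed
  then have "card {i\<in>{0..<n}. block_code a b \<omega> i = block_code a b \<omega>' i} \<le> card {0..<fact k :: nat}"
    by (intro card_mono) auto
  then have "real (card {i\<in>{0..<n}. block_code a b \<omega> i = block_code a b \<omega>' i}) \<le> fact k"
    by (metis card_atLeastLessThan diff_zero of_nat_fact of_nat_le_iff)
  moreover have "fact k \<le> \<delta> * real n"
    using K \<open>K + N \<le> k\<close> by (simp add: n_def del: fact_Suc)
  ultimately show ?thesis
    using \<open>N \<le> n\<close> by (intro exI[of _ n]) (auto intro: order_trans)
qed

lemma block_code_window_agreement_dense:
  assumes "\<delta> > 0"
  shows "\<exists>n\<ge>N. (1 - \<delta>) * real n \<le>
    real (card {i\<in>{0..<n}. D \<le> i \<and> (\<forall>j\<in>{i - D..i + M}. block_code a b \<omega> j = block_code a b \<omega>' j)})"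
    (is "\<exists>n\<ge>N. _ \<le> real (card (?G n))")
proof -
  obtain K where K: "\<forall>k\<ge>K. (1 + real D + real M) * fact k \<le> \<delta> * fact (Suc k)"
    using eventually_fact_le_mult_fact_Suc[OF assms] by (auto simp: eventually_sequentially)
  define k where "k = 2 * (K + N)"
  define n where "n = (fact (Suc k) :: nat)"
  have "N \<le> n"
    using fact_ge_self[of "Suc k"] by (simp add: n_def k_def)
  have "{fact k + D..<n - M} \<subseteq> ?G n"
  proof
    fix i assume i: "i \<in> {fact k + D..<n - M}"
    have "block_code a b \<omega> j = block_code a b \<omega>' j" if "j \<in> {i - D..i + M}" for j
    proof -
      have "fact k \<le> j" "j < fact (Suc k)" "even k"
        using i that by (auto simp: n_def k_def)
      then show ?thesis
        by (simp add: block_code_even_block)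
    qed
    with i show "i \<in> ?G n"
      by auto
  qed
  then have "card {fact k + D..<n - M} \<le> card (?G n)"
    by (intro card_mono) auto
  then have "n - M - (fact k + D) \<le> card (?G n)"
    by simp
  then have "real n - M - fact k - D \<le> card (?G n)"
    using of_nat_fact[of k, where 'a=real] by linarith
  moreover have "fact k + D + M \<le> (1 + real D + real M) * fact k"
  proof -
    have "(real D + M) * 1 \<le> (real D + M) * fact k"
      by (intro mult_left_mono) auto
    then show ?thesis
      by (simp add: algebra_simps)
  qed
  moreover have "(1 + real D + real M) * fact k \<le> \<delta> * real n"
    using K by (simp add: n_def k_def del: fact_Suc)
  ultimately show ?thesis
    using \<open>N \<le> n\<close> by (intro exI[of _ n]) (simp add: algebra_simps)
qed

locale discrete_power_metric = Metric_space "PiE \<Gamma> (\<lambda>_. X)" d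
  for X :: "'a set" and \<Gamma> :: "'g set" and d :: "('g \<Rightarrow> 'a) \<Rightarrow> ('g \<Rightarrow> 'a) \<Rightarrow> real" +
  assumes finite_X: "finite X"
    and mtopology_eq_product: "mtopology = product_topology (\<lambda>_. discrete_topology X) \<Gamma>"
begin

lemma compact_space_square: "compact_space (prod_topology mtopology mtopology)"
  using finite_X
  by (simp add: mtopology_eq_product compact_space_prod_topology compact_space_product_topology
      compact_space_discrete_topology)

lemma continuous_map_square_mdist: "continuous_map (prod_topology mtopology mtopology) euclideanreal (\<lambda>(u, v). d u v)"
  using continuous_map_metric[of "metric (\<Gamma> \<rightarrow>\<^sub>E X, d)"] by simp

lemma continuous_map_coordinate_pair:
  assumes "\<gamma> \<in> \<Gamma>"
  shows "continuous_map (prod_topology mtopology mtopology) (discrete_topology (X \<times> X))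
           (\<lambda>(u, v). (u \<gamma>, v \<gamma>))"
proof -
  have "continuous_map mtopology (discrete_topology X) (\<lambda>u. u \<gamma>)"
    using continuous_map_product_projection[OF assms] by (simp add: mtopology_eq_product)
  then have "continuous_map (prod_topology mtopology mtopology) (discrete_topology X) ((\<lambda>u. u \<gamma>) \<circ> fst)"
    and "continuous_map (prod_topology mtopology mtopology) (discrete_topology X) ((\<lambda>u. u \<gamma>) \<circ> snd)"
    by (auto intro: continuous_map_compose continuous_map_fst continuous_map_snd)
  then show ?thesis
    unfolding prod_topology_discrete_topology continuous_map_pairwise
    by (simp add: o_def case_prod_unfold)
qed

lemma uniform_separation_at_coordinate:
  assumes "\<theta> \<in> \<Gamma>"
  shows "\<exists>\<epsilon>>0. \<forall>u\<in>\<Gamma> \<rightarrow>\<^sub>E X. \<forall>v\<in>\<Gamma> \<rightarrow>\<^sub>E X. u \<theta> \<noteq> v \<theta> \<longrightarrow> \<epsilon> \<le> d u v"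
proof -
  define S where "S = {(u, v) \<in> (\<Gamma> \<rightarrow>\<^sub>E X) \<times> (\<Gamma> \<rightarrow>\<^sub>E X). u \<theta> \<noteq> v \<theta>}"
  have "S = {p \<in> topspace (prod_topology mtopology mtopology). (\<lambda>(u, v). (u \<theta>, v \<theta>)) p \<in> {(x, y) \<in> X \<times> X. x \<noteq> y}}"
    using assms by (auto simp: S_def)
  then have "closedin (prod_topology mtopology mtopology) S"
    by (simp only:) (rule closedin_continuous_map_preimage[OF continuous_map_coordinate_pair[OF assms]], auto)
  then have "compactin euclideanreal ((\<lambda>(u, v). d u v) ` S)"
    using compact_space_square closedin_compact_space image_compactin[OF _ continuous_map_square_mdist] by blast
  then have "closed ((\<lambda>(u, v). d u v) ` S)"
    by (simp add: compact_imp_closed)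
  moreover have "0 \<notin> (\<lambda>(u, v). d u v) ` S"
    using mdist_pos_less by (force simp: S_def)
  ultimately obtain \<epsilon> where "\<epsilon> > 0" "\<forall>t\<in>(\<lambda>(u, v). d u v) ` S. \<epsilon> \<le> dist 0 t"
    by (blast dest: separate_point_closed)
  then have "\<epsilon> \<le> d u v" if "(u, v) \<in> S" for u v
    using that by (force simp: S_def)
  with \<open>\<epsilon> > 0\<close> show ?thesis
    by (auto simp: S_def)
qed

lemma finite_coordinates_determine_mdist:
  assumes "s > 0"
  shows "\<exists>F. finite F \<and> F \<subseteq> \<Gamma> \<and> (\<forall>u\<in>\<Gamma> \<rightarrow>\<^sub>E X. \<forall>v\<in>\<Gamma> \<rightarrow>\<^sub>E X. (\<forall>\<gamma>\<in>F. u \<gamma> = v \<gamma>) \<longrightarrow> d u v < s)"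
proof -
  define S where "S = {(u, v) \<in> (\<Gamma> \<rightarrow>\<^sub>E X) \<times> (\<Gamma> \<rightarrow>\<^sub>E X). s \<le> d u v}"
  define U where "U \<gamma> = {(u, v) \<in> (\<Gamma> \<rightarrow>\<^sub>E X) \<times> (\<Gamma> \<rightarrow>\<^sub>E X). u \<gamma> \<noteq> v \<gamma>}" for \<gamma>
  have "S = {p \<in> topspace (prod_topology mtopology mtopology). (\<lambda>(u, v). d u v) p \<in> {s..}}"
    by (auto simp: S_def)
  then have "closedin (prod_topology mtopology mtopology) S"
    by (simp only:) (rule closedin_continuous_map_preimage[OF continuous_map_square_mdist], auto)
  then have compact: "compactin (prod_topology mtopology mtopology) S"
    using compact_space_square closedin_compact_space by blast
  have "openin (prod_topology mtopology mtopology) (U \<gamma>)" if "\<gamma> \<in> \<Gamma>" for \<gamma>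
  proof -
    have "U \<gamma> = {p \<in> topspace (prod_topology mtopology mtopology). (\<lambda>(u, v). (u \<gamma>, v \<gamma>)) p \<in> {(x, y) \<in> X \<times> X. x \<noteq> y}}"
      using that by (auto simp: U_def)
    then show ?thesis
      by (simp only:) (rule openin_continuous_map_preimage[OF continuous_map_coordinate_pair[OF that]], auto)
  qed
  then have "\<forall>B\<in>U ` \<Gamma>. openin (prod_topology mtopology mtopology) B"
    by blast
  moreover have "S \<subseteq> \<Union> (U ` \<Gamma>)"
  proof (clarify)
    fix u v assume uv: "(u, v) \<in> S"
    then have "u \<noteq> v"
      using assms by (auto simp: S_def)
    then obtain \<gamma> where "u \<gamma> \<noteq> v \<gamma>"
      by blast
    moreover from uv have "\<gamma> \<in> \<Gamma>"
      using calculation PiE_arb[of u \<Gamma> "\<lambda>_. X" \<gamma>] PiE_arb[of v \<Gamma> "\<lambda>_. X" \<gamma>] by (auto simp: S_def)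
    ultimately show "(u, v) \<in> \<Union> (U ` \<Gamma>)"
      using uv by (auto simp: S_def U_def)
  qed
  ultimately obtain \<U> where "finite \<U>" "\<U> \<subseteq> U ` \<Gamma>" "S \<subseteq> \<Union> \<U>"
    using compact unfolding compactin_def by blast
  then obtain F where F: "finite F" "F \<subseteq> \<Gamma>" "S \<subseteq> \<Union> (U ` F)"
    by (metis finite_subset_image)
  have "d u v < s" if "u \<in> \<Gamma> \<rightarrow>\<^sub>E X" "v \<in> \<Gamma> \<rightarrow>\<^sub>E X" "\<forall>\<gamma>\<in>F. u \<gamma> = v \<gamma>" for u v
  proof (rule ccontr)
    assume "\<not> d u v < s"
    with that have "(u, v) \<in> S"
      by (simp add: S_def)
    with F(3) that(3) show False
      by (auto simp: U_def)
  qed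
  with F(1,2) show ?thesis
    by (intro exI[of _ F]) auto
qed

end

lemma uncountable_UNIV_nat_to_bool: "uncountable (UNIV :: (nat \<Rightarrow> bool) set)"
proof
  assume "countable (UNIV :: (nat \<Rightarrow> bool) set)"
  then obtain f :: "nat \<Rightarrow> nat \<Rightarrow> bool" where "range f = UNIV"
    using uncountable_def by blast
  then obtain n where "f n = (\<lambda>k. \<not> f k k)"
    by (metis UNIV_I imageE)
  then show False
    by (metis (full_types))
qed

lemma inj_orbit_if_non_quasi_periodic:
  assumes "non_quasi_periodic \<phi> \<theta>"
  shows "inj (\<lambda>n. (\<phi> ^^ n) \<theta>)"
proof (rule ccontr)
  assume "\<not> inj (\<lambda>n. (\<phi> ^^ n) \<theta>)"
  then obtain m n where mn: "m < n" "(\<phi> ^^ m) \<theta> = (\<phi> ^^ n) \<theta>"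
    unfolding inj_def by (metis linorder_neqE_nat)
  have "(\<phi> ^^ k) \<theta> \<in> (\<lambda>i. (\<phi> ^^ i) \<theta>) ` {..<n}" for k
  proof (induction k rule: less_induct)
    case (less k)
    show ?case
    proof (cases "k < n")
      case False
      then have "(\<phi> ^^ k) \<theta> = (\<phi> ^^ (k - n)) ((\<phi> ^^ n) \<theta>)"
        by (metis funpow_add comp_apply le_add_diff_inverse2 not_less)
      also have "\<dots> = (\<phi> ^^ (k - n + m)) \<theta>"
        by (simp add: mn(2)[symmetric] funpow_add)
      finally show ?thesis
        using less[of "k - n + m"] mn(1) False by simp
    qed simp
  qed
  then have "{(\<phi> ^^ i) \<theta> | i. True} \<subseteq> (\<lambda>i. (\<phi> ^^ i) \<theta>) ` {..<n}"
    by blast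
  then have "finite {(\<phi> ^^ i) \<theta> | i. True}"
    using finite_subset by blast
  with assms show False
    by (simp add: non_quasi_periodic_def)
qed

lemma funpow_in_funcset:
  assumes "\<phi> \<in> \<Gamma> \<rightarrow> \<Gamma>" "\<gamma> \<in> \<Gamma>"
  shows "(\<phi> ^^ n) \<gamma> \<in> \<Gamma>"
  using assms by (induction n) auto

lemma funpow_shift_map:
  assumes "\<phi> \<in> \<Gamma> \<rightarrow> \<Gamma>" "x \<in> extensional \<Gamma>"
  shows "(shift_map \<phi> \<Gamma> ^^ n) x = (\<lambda>\<gamma>\<in>\<Gamma>. x ((\<phi> ^^ n) \<gamma>))"
proof (induction n)
  case 0
  then show ?case
    using assms(2) by (simp add: extensional_restrict)
next
  case (Suc n)
  have "(shift_map \<phi> \<Gamma> ^^ Suc n) x = (\<lambda>\<alpha>\<in>\<Gamma>. (\<lambda>\<gamma>\<in>\<Gamma>. x ((\<phi> ^^ n) \<gamma>)) (\<phi> \<alpha>))"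
    by (simp add: Suc shift_map_def)
  also have "\<dots> = (\<lambda>\<gamma>\<in>\<Gamma>. x ((\<phi> ^^ Suc n) \<gamma>))"
    using assms(1) by (intro restrict_ext) (auto simp: funpow_Suc_right simp del: funpow.simps)
  finally show ?case .
qed

lemma funpow_shift_map_PiE:
  assumes "\<phi> \<in> \<Gamma> \<rightarrow> \<Gamma>" "x \<in> \<Gamma> \<rightarrow>\<^sub>E X"
  shows "(shift_map \<phi> \<Gamma> ^^ n) x \<in> \<Gamma> \<rightarrow>\<^sub>E X"
  using assms funpow_in_funcset[OF assms(1)] by (auto simp: funpow_shift_map PiE_iff)

text \<open>Only meaningful when the orbit of \<open>\<theta>\<close> is injective (otherwise \<open>inv\<close> picks an
  arbitrary index); then the \<open>n\<close>-th shift reads \<open>c n\<close> at coordinate \<open>\<theta>\<close>.\<close>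
definition orbit_embed :: "('g \<Rightarrow> 'g) \<Rightarrow> 'g set \<Rightarrow> 'g \<Rightarrow> 'a \<Rightarrow> (nat \<Rightarrow> 'a) \<Rightarrow> 'g \<Rightarrow> 'a" where
  "orbit_embed \<phi> \<Gamma> \<theta> a c =
     (\<lambda>\<gamma>\<in>\<Gamma>. if \<gamma> \<in> range (\<lambda>n. (\<phi> ^^ n) \<theta>) then c (inv (\<lambda>n. (\<phi> ^^ n) \<theta>) \<gamma>) else a)"

lemma orbit_embed_PiE:
  assumes "a \<in> X" "range c \<subseteq> X"
  shows "orbit_embed \<phi> \<Gamma> \<theta> a c \<in> \<Gamma> \<rightarrow>\<^sub>E X"
  using assms by (auto simp: orbit_embed_def image_subset_iff)

lemma orbit_embed_orbit:
  assumes "inj (\<lambda>n. (\<phi> ^^ n) \<theta>)" "(\<phi> ^^ n) \<theta> \<in> \<Gamma>"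
  shows "orbit_embed \<phi> \<Gamma> \<theta> a c ((\<phi> ^^ n) \<theta>) = c n"
  using assms inv_f_f[OF assms(1), of n] by (simp add: orbit_embed_def)

lemma inj_orbit_embed:
  assumes "\<phi> \<in> \<Gamma> \<rightarrow> \<Gamma>" "\<theta> \<in> \<Gamma>" "inj (\<lambda>n. (\<phi> ^^ n) \<theta>)"
  shows "inj (orbit_embed \<phi> \<Gamma> \<theta> a)"
  by (rule injI) (metis ext orbit_embed_orbit funpow_in_funcset assms)

lemma funpow_shift_orbit_embed:
  assumes "\<phi> \<in> \<Gamma> \<rightarrow> \<Gamma>" "\<gamma> \<in> \<Gamma>"
  shows "(shift_map \<phi> \<Gamma> ^^ i) (orbit_embed \<phi> \<Gamma> \<theta> a c) \<gamma> = orbit_embed \<phi> \<Gamma> \<theta> a c ((\<phi> ^^ i) \<gamma>)"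
  using assms by (simp add: funpow_shift_map orbit_embed_def)

text \<open>A coordinate \<open>\<gamma>\<close> whose orbit joins that of \<open>\<theta>\<close>, say \<open>\<phi>\<^sup>k \<gamma> = \<phi>\<^sup>m \<theta>\<close>, sees the
  embedded sequence with the delay \<open>k - m\<close>; any other coordinate always sees \<open>a\<close>.\<close>
lemma shift_orbit_embed_window:
  assumes "\<phi> \<in> \<Gamma> \<rightarrow> \<Gamma>" "\<theta> \<in> \<Gamma>" "inj (\<lambda>n. (\<phi> ^^ n) \<theta>)" "\<gamma> \<in> \<Gamma>"
  shows "\<exists>k m. \<forall>i c c'. k \<le> i \<longrightarrow> c (i - k + m) = c' (i - k + m) \<longrightarrow>
           (shift_map \<phi> \<Gamma> ^^ i) (orbit_embed \<phi> \<Gamma> \<theta> a c) \<gamma> =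
           (shift_map \<phi> \<Gamma> ^^ i) (orbit_embed \<phi> \<Gamma> \<theta> a c') \<gamma>"
proof (cases "\<exists>k m. (\<phi> ^^ k) \<gamma> = (\<phi> ^^ m) \<theta>")
  case True
  then obtain k m where km: "(\<phi> ^^ k) \<gamma> = (\<phi> ^^ m) \<theta>"
    by blast
  have "(\<phi> ^^ i) \<gamma> = (\<phi> ^^ (i - k + m)) \<theta>" if "k \<le> i" for i
  proof -
    have "(\<phi> ^^ i) \<gamma> = (\<phi> ^^ (i - k)) ((\<phi> ^^ k) \<gamma>)"
      using that by (metis funpow_add comp_apply le_add_diff_inverse2)
    then show ?thesis
      by (simp add: km funpow_add)
  qed
  then show ?thesis
    using assms funpow_in_funcset[OF assms(1,2)]
    by (intro exI[of _ k] exI[of _ m]) (simp add: funpow_shift_orbit_embed orbit_embed_orbit)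
next
  case False
  then have "(\<phi> ^^ i) \<gamma> \<notin> range (\<lambda>n. (\<phi> ^^ n) \<theta>)" for i
    by blast
  then have "(shift_map \<phi> \<Gamma> ^^ i) (orbit_embed \<phi> \<Gamma> \<theta> a c) \<gamma> = a" for i c
    using assms funpow_in_funcset[OF assms(1,4)]
    by (simp add: funpow_shift_orbit_embed) (simp add: orbit_embed_def)
  then show ?thesis
    by simp
qed

lemma shift_orbit_embed_finite_window:
  assumes "\<phi> \<in> \<Gamma> \<rightarrow> \<Gamma>" "\<theta> \<in> \<Gamma>" "inj (\<lambda>n. (\<phi> ^^ n) \<theta>)" "finite F" "F \<subseteq> \<Gamma>"
  shows "\<exists>D M. \<forall>i c c'. D \<le> i \<longrightarrow> (\<forall>j\<in>{i - D..i + M}. c j = c' j) \<longrightarrow>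
           (\<forall>\<gamma>\<in>F. (shift_map \<phi> \<Gamma> ^^ i) (orbit_embed \<phi> \<Gamma> \<theta> a c) \<gamma> =
                  (shift_map \<phi> \<Gamma> ^^ i) (orbit_embed \<phi> \<Gamma> \<theta> a c') \<gamma>)"
  using assms(4,5)
proof (induction rule: finite_subset_induct)
  case empty
  show ?case
    by blast
next
  case (insert \<gamma> F)
  obtain D M where DM: "\<forall>i c c'. D \<le> i \<longrightarrow> (\<forall>j\<in>{i - D..i + M}. c j = c' j) \<longrightarrow>
      (\<forall>\<gamma>\<in>F. (shift_map \<phi> \<Gamma> ^^ i) (orbit_embed \<phi> \<Gamma> \<theta> a c) \<gamma> =
             (shift_map \<phi> \<Gamma> ^^ i) (orbit_embed \<phi> \<Gamma> \<theta> a c') \<gamma>)"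
    using insert.IH by (elim exE) (rule that)
  obtain k m where km: "\<forall>i c c'. k \<le> i \<longrightarrow> c (i - k + m) = c' (i - k + m) \<longrightarrow>
      (shift_map \<phi> \<Gamma> ^^ i) (orbit_embed \<phi> \<Gamma> \<theta> a c) \<gamma> =
      (shift_map \<phi> \<Gamma> ^^ i) (orbit_embed \<phi> \<Gamma> \<theta> a c') \<gamma>"
    using shift_orbit_embed_window[OF assms(1-3) insert.hyps(2), where a=a] by (elim exE) (rule that)
  have "\<forall>\<gamma>'\<in>insert \<gamma> F. (shift_map \<phi> \<Gamma> ^^ i) (orbit_embed \<phi> \<Gamma> \<theta> a c) \<gamma>' =
          (shift_map \<phi> \<Gamma> ^^ i) (orbit_embed \<phi> \<Gamma> \<theta> a c') \<gamma>'"
    if "D + k \<le> i" "\<forall>j\<in>{i - (D + k)..i + (M + m)}. c j = c' j" for i c c'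
  proof -
    have "{i - D..i + M} \<subseteq> {i - (D + k)..i + (M + m)}" "i - k + m \<in> {i - (D + k)..i + (M + m)}"
      using that(1) by auto
    then have "\<forall>j\<in>{i - D..i + M}. c j = c' j" "c (i - k + m) = c' (i - k + m)"
      using that(2) by blast+
    then show ?thesis
      using that(1) DM[rule_format, of i c c'] km[rule_format, of i c c'] by simp
  qed
  then show ?case
    by blast
qed

context discrete_power_metric
begin

lemma F_lower_shift_orbit_embed_eq_0:
  assumes "\<phi> \<in> \<Gamma> \<rightarrow> \<Gamma>" "\<theta> \<in> \<Gamma>" "inj (\<lambda>n. (\<phi> ^^ n) \<theta>)"
    and "a \<in> X" "range c \<subseteq> X" "range c' \<subseteq> X"
    and separated: "\<forall>u\<in>\<Gamma> \<rightarrow>\<^sub>E X. \<forall>v\<in>\<Gamma> \<rightarrow>\<^sub>E X. u \<theta> \<noteq> v \<theta> \<longrightarrow> \<epsilon> \<le> d u v"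
    and sparse: "\<And>\<delta> N. \<delta> > 0 \<Longrightarrow> \<exists>n\<ge>N. real (card {i\<in>{0..<n}. c i = c' i}) \<le> \<delta> * real n"
  shows "F_lower d (shift_map \<phi> \<Gamma>) (orbit_embed \<phi> \<Gamma> \<theta> a c) (orbit_embed \<phi> \<Gamma> \<theta> a c') \<epsilon> = 0"
  unfolding F_lower_def xi_def
proof (rule liminf_density_eq_0I[OF _ sparse])
  fix i
  let ?x = "(shift_map \<phi> \<Gamma> ^^ i) (orbit_embed \<phi> \<Gamma> \<theta> a c)"
  let ?y = "(shift_map \<phi> \<Gamma> ^^ i) (orbit_embed \<phi> \<Gamma> \<theta> a c')"
  assume "d ?x ?y < \<epsilon>"
  moreover have "?x \<in> \<Gamma> \<rightarrow>\<^sub>E X" "?y \<in> \<Gamma> \<rightarrow>\<^sub>E X"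
    by (intro funpow_shift_map_PiE[OF assms(1)] orbit_embed_PiE[OF assms(4)] assms(5,6))+
  ultimately have "?x \<theta> = ?y \<theta>"
    using separated by (meson not_less)
  then show "c i = c' i"
    using assms(1-3) funpow_in_funcset[OF assms(1,2)]
    by (simp add: funpow_shift_orbit_embed orbit_embed_orbit)
qed

lemma F_upper_shift_orbit_embed_eq_1:
  assumes "\<phi> \<in> \<Gamma> \<rightarrow> \<Gamma>" "\<theta> \<in> \<Gamma>" "inj (\<lambda>n. (\<phi> ^^ n) \<theta>)"
    and "a \<in> X" "range c \<subseteq> X" "range c' \<subseteq> X" "s > 0"
    and dense: "\<And>D M \<delta> N. \<delta> > 0 \<Longrightarrow>
      \<exists>n\<ge>N. (1 - \<delta>) * real n \<le> real (card {i\<in>{0..<n}. D \<le> i \<and> (\<forall>j\<in>{i - D..i + M}. c j = c' j)})"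
  shows "F_upper d (shift_map \<phi> \<Gamma>) (orbit_embed \<phi> \<Gamma> \<theta> a c) (orbit_embed \<phi> \<Gamma> \<theta> a c') s = 1"
proof -
  obtain F where F: "finite F" "F \<subseteq> \<Gamma>"
    "\<forall>u\<in>\<Gamma> \<rightarrow>\<^sub>E X. \<forall>v\<in>\<Gamma> \<rightarrow>\<^sub>E X. (\<forall>\<gamma>\<in>F. u \<gamma> = v \<gamma>) \<longrightarrow> d u v < s"
    using finite_coordinates_determine_mdist[OF assms(7)] by blast
  obtain D M where DM: "\<forall>i c c'. D \<le> i \<longrightarrow> (\<forall>j\<in>{i - D..i + M}. c j = c' j) \<longrightarrow>
      (\<forall>\<gamma>\<in>F. (shift_map \<phi> \<Gamma> ^^ i) (orbit_embed \<phi> \<Gamma> \<theta> a c) \<gamma> =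
             (shift_map \<phi> \<Gamma> ^^ i) (orbit_embed \<phi> \<Gamma> \<theta> a c') \<gamma>)"
    using shift_orbit_embed_finite_window[OF assms(1-3) F(1,2), where a=a] by (elim exE) (rule that)
  show ?thesis
    unfolding F_upper_def xi_def
  proof (rule limsup_density_eq_1I[OF _ dense[of _ _ D M]])
    fix i
    let ?x = "(shift_map \<phi> \<Gamma> ^^ i) (orbit_embed \<phi> \<Gamma> \<theta> a c)"
    let ?y = "(shift_map \<phi> \<Gamma> ^^ i) (orbit_embed \<phi> \<Gamma> \<theta> a c')"
    assume "D \<le> i \<and> (\<forall>j\<in>{i - D..i + M}. c j = c' j)"
    then have "\<forall>\<gamma>\<in>F. ?x \<gamma> = ?y \<gamma>"
      using DM[rule_format, of i c c'] by blast
    moreover have "?x \<in> \<Gamma> \<rightarrow>\<^sub>E X" "?y \<in> \<Gamma> \<rightarrow>\<^sub>E X"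
      by (intro funpow_shift_map_PiE[OF assms(1)] orbit_embed_PiE[OF assms(4)] assms(5,6))+
    ultimately show "d ?x ?y < s"
      using F(3) by blast
  qed
qed

lemma shift_block_code_pair_scrambled:
  fixes \<omega> \<omega>' :: "nat \<Rightarrow> bool"
  assumes "\<phi> \<in> \<Gamma> \<rightarrow> \<Gamma>" "\<theta> \<in> \<Gamma>" "inj (\<lambda>n. (\<phi> ^^ n) \<theta>)"
    and ab: "a \<in> X" "b \<in> X" "a \<noteq> b"
    and separated: "\<forall>u\<in>\<Gamma> \<rightarrow>\<^sub>E X. \<forall>v\<in>\<Gamma> \<rightarrow>\<^sub>E X. u \<theta> \<noteq> v \<theta> \<longrightarrow> \<epsilon> \<le> d u v"
  defines "x \<equiv> orbit_embed \<phi> \<Gamma> \<theta> a (block_code a b \<omega>)"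
    and "y \<equiv> orbit_embed \<phi> \<Gamma> \<theta> a (block_code a b \<omega>')"
  assumes "x \<noteq> y"
  shows "(\<forall>s>0. F_upper d (shift_map \<phi> \<Gamma>) x y s = 1) \<and> F_lower d (shift_map \<phi> \<Gamma>) x y \<epsilon> = 0"
proof -
  from \<open>x \<noteq> y\<close> have "\<omega> \<noteq> \<omega>'"
    unfolding x_def y_def by blast
  then obtain j where j: "\<omega> j \<noteq> \<omega>' j"
    by blast
  note codes = range_block_code_subset[OF ab(1,2)]
  show ?thesis
    unfolding x_def y_def
    using F_upper_shift_orbit_embed_eq_1[OF assms(1-3) ab(1) codes codes _
        block_code_window_agreement_dense]
      F_lower_shift_orbit_embed_eq_0[OF assms(1-3) ab(1) codes codes separated
        block_code_agreement_sparse[where \<omega>=\<omega> and \<omega>'=\<omega>', OF j ab(3)]]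
    by blast
qed

end

theorem lemma3p4:
  fixes X :: "'a set" and \<Gamma> :: "'g set" and \<phi> :: "'g \<Rightarrow> 'g"
    and d :: "('g \<Rightarrow> 'a) \<Rightarrow> ('g \<Rightarrow> 'a) \<Rightarrow> real"
  assumes "finite X" and "card X \<ge> 2"
    and "countable \<Gamma>" and "\<Gamma> \<noteq> {}"
    and "\<phi> \<in> \<Gamma> \<rightarrow> \<Gamma>"
    and "\<exists>\<theta>\<in>\<Gamma>. non_quasi_periodic \<phi> \<theta>"
    and "Metric_space (PiE \<Gamma> (\<lambda>_. X)) d"
    and "Metric_space.mtopology (PiE \<Gamma> (\<lambda>_. X)) d
           = product_topology (\<lambda>_. discrete_topology X) \<Gamma>"
  shows "uniform_distributional_chaotic (PiE \<Gamma> (\<lambda>_. X)) d (shift_map \<phi> \<Gamma>)"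
proof -
  interpret discrete_power_metric X \<Gamma> d
    by (rule discrete_power_metric.intro[OF assms(7) discrete_power_metric_axioms.intro[OF assms(1,8)]])
  obtain \<theta> where "\<theta> \<in> \<Gamma>" "non_quasi_periodic \<phi> \<theta>"
    using assms(6) by blast
  then have \<theta>: "\<theta> \<in> \<Gamma>" "inj (\<lambda>n. (\<phi> ^^ n) \<theta>)"
    by (simp_all add: inj_orbit_if_non_quasi_periodic)
  have "\<not> card X \<le> Suc 0"
    using assms(2) by simp
  then obtain a b where ab: "a \<in> X" "b \<in> X" "a \<noteq> b"
    using card_le_Suc0_iff_eq[OF assms(1)] by blast
  obtain \<epsilon> where \<epsilon>: "\<epsilon> > 0" "\<forall>u\<in>\<Gamma> \<rightarrow>\<^sub>E X. \<forall>v\<in>\<Gamma> \<rightarrow>\<^sub>E X. u \<theta> \<noteq> v \<theta> \<longrightarrow> \<epsilon> \<le> d u v"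
    using uniform_separation_at_coordinate[OF \<theta>(1)] by (elim exE conjE) (rule that)
  define P where "P = orbit_embed \<phi> \<Gamma> \<theta> a \<circ> block_code a b"
  have "range P \<subseteq> \<Gamma> \<rightarrow>\<^sub>E X"
    unfolding P_def comp_def
    by (intro image_subsetI orbit_embed_PiE[OF ab(1) range_block_code_subset[OF ab(1,2)]])
  moreover have "inj P"
    unfolding P_def by (rule inj_compose[OF inj_orbit_embed[OF assms(5) \<theta>] inj_block_code[OF ab(3)]])
  then have "uncountable (range P)"
    using countable_image_inj_on uncountable_UNIV_nat_to_bool by blast
  moreover have "(\<forall>s>0. F_upper d (shift_map \<phi> \<Gamma>) (P \<omega>) (P \<omega>') s = 1) \<and>
      F_lower d (shift_map \<phi> \<Gamma>) (P \<omega>) (P \<omega>') \<epsilon> = 0" if "P \<omega> \<noteq> P \<omega>'" for \<omega> \<omega>'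
    using shift_block_code_pair_scrambled[OF assms(5) \<theta> ab \<epsilon>(2)] that by (simp add: P_def)
  ultimately show ?thesis
    unfolding uniform_distributional_chaotic_def using \<epsilon>(1)
    by (intro exI[of _ "range P"] conjI exI[of _ \<epsilon>]) auto
qed

end
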